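(* Let $k\ge 1$ be an integer and let $T$ be the complete rooted tree with root $r$ and depth $k$ in which every internal node has exactly $k^4$ children. Assign to each edge $e$ of $T$ an independent arrival time $r_e$ uniform on $[0,1]$. Then with probability at least $1-\frac{2k^{2k}}{e^{k^3/8}}$ there exists a bad subtree of $T$.
   Context: The height of a node $u$ of $T$ is the number of edges between $u$ and a closest leaf (so leaves have height $0$ and $r$ has height $k$). A child edge of $u$ is an edge from $u$ to one of its children. For $h=1,\dots,k$ let $I_h=((h-1)/k,\,h/k)$. A non-leaf node $u$ of height $h$ is bad if at least $k^2$ of its child edges $e$ have arrival time $r_e\in I_h$. A bad subtree is a subtree $T'$ of $T$ containing the root $r$ that is a full $k^2$-ary tree of height $k$ (every internal node of $T'$ has exactly $k^2$ children in $T'$, which are children in $T$, and all leaves of $T'$ are leaves of $T$) and all of whose internal nodes are bad. *)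

theory Defs
  imports "HOL-Probability.Probability"
begin

text \<open>Nodes of the complete rooted tree of depth k in which every internal node has
  exactly d children are represented as paths from the root: lists of child indices
  (each < d) of length at most k.  The root is the empty list, the children of u
  are u @ [i] for i < d, and leaves are the lists of length k.\<close>

definition tree_nodes :: "nat \<Rightarrow> nat \<Rightarrow> nat list set" where
  "tree_nodes d k = {u. length u \<le> k \<and> (\<forall>x\<in>set u. x < d)}"

text \<open>Edges are identified with their lower endpoint (every non-root node).\<close>
definition tree_edges :: "nat \<Rightarrow> nat \<Rightarrow> nat list set" where
  "tree_edges d k = {u \<in> tree_nodes d k. u \<noteq> []}"

text \<open>Height of a node = distance to a closest leaf; in a complete tree of depth k
  this is k minus the depth.\<close>
definition height :: "nat \<Rightarrow> nat list \<Rightarrow> nat" where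
  "height k u = k - length u"

definition Ival :: "nat \<Rightarrow> nat \<Rightarrow> real set" where
  "Ival k h = {(real h - 1) / real k <..< real h / real k}"

definition bad_node :: "nat \<Rightarrow> nat \<Rightarrow> (nat list \<Rightarrow> real) \<Rightarrow> nat list \<Rightarrow> bool" where
  "bad_node d k r u \<longleftrightarrow> u \<in> tree_nodes d k \<and> length u < k \<and>
     card {i. i < d \<and> r (u @ [i]) \<in> Ival k (height k u)} \<ge> k^2"

text \<open>A bad subtree: a set S of nodes of T, containing the root, closed under taking
  parents (so it is a rooted subtree), in which every node that is not a leaf of T
  has exactly k^2 children in S (so S is a full k^2-ary tree of height k whose leaves
  are leaves of T), and all internal nodes of S are bad.\<close>
definition bad_subtree :: "nat \<Rightarrow> nat \<Rightarrow> (nat list \<Rightarrow> real) \<Rightarrow> nat list set \<Rightarrow> bool" where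
  "bad_subtree d k r S \<longleftrightarrow>
     S \<subseteq> tree_nodes d k \<and> [] \<in> S \<and>
     (\<forall>u\<in>S. u \<noteq> [] \<longrightarrow> butlast u \<in> S) \<and>
     (\<forall>u\<in>S. length u < k \<longrightarrow>
        card {i. i < d \<and> u @ [i] \<in> S} = k^2 \<and> bad_node d k r u)"

definition arrival_space :: "nat \<Rightarrow> nat \<Rightarrow> (nat list \<Rightarrow> real) measure" where
  "arrival_space d k = PiM (tree_edges d k) (\<lambda>_. uniform_measure lborel {0..1::real})"

end

theory Submission
  imports Defs
begin

text \<open>The nodes all of whose child indices are below k^2 form a full k^2-ary subtree of height k;
  it is a bad subtree as soon as each of its at most k^(2k) internal nodes is bad. A node of
  height h has k^4 child edges, each arriving in I_h independently with probability 1/k. By a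
  Chernoff bound, fewer than k^2 of them do so with probability at most
  2^(k^2-1) (1 - 1/(2k))^(k^4) \<le> exp (-k^3/8), and a union bound over the internal nodes
  finishes the proof.\<close>

abbreviation uniform01 :: "real measure" where
  "uniform01 \<equiv> uniform_measure lborel {0..1}"

lemma prob_space_uniform01: "prob_space uniform01"
  by (rule prob_space_uniform_measure) auto

lemma measure_uniform01_Ioo:
  assumes "0 \<le> a" "a \<le> b" "b \<le> 1"
  shows "measure uniform01 {a<..<b} = b - a"
proof -
  have "{0..1} \<inter> {a<..<b} = {a<..<b}"
    using assms by auto
  then show ?thesis
    using assms by simp
qed

lemma measure_PiM_few_hits_le:
  fixes N :: "'b measure" and I :: "'a set"
  assumes N: "prob_space N" and I: "finite I" "C \<subseteq> I" and A: "A \<in> sets N"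
  shows "measure (PiM I (\<lambda>_. N)) {x \<in> space (PiM I (\<lambda>_. N)). card {i \<in> C. x i \<in> A} \<le> m}
           \<le> 2 ^ m * (1 - measure N A / 2) ^ card C"
proof -
  interpret N: prob_space N by (fact N)
  interpret product_sigma_finite "\<lambda>_. N"
    by (simp add: product_sigma_finite_def N.sigma_finite_measure_axioms)
  \<comment> \<open>Markov's inequality for 2^-(number of hits), whose expectation factorises\<close>
  define f where "f i = (\<lambda>y. if i \<in> C \<and> y \<in> A then 1 / 2 else 1 :: real)" for i
  have f_borel: "f i \<in> borel_measurable N" for i
    using A unfolding f_def by measurable
  have f_integrable: "integrable N (f i)" for i
    by (rule N.integrable_const_bound[where B = 1]) (use f_borel in \<open>auto simp: f_def\<close>)
  have "integral\<^sup>L N (f i) = 1 - measure N A / 2" if "i \<in> C" for i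
  proof -
    have "integral\<^sup>L N (f i) = (\<integral>y. 1 - indicator A y / 2 \<partial>N)"
      using that by (intro Bochner_Integration.integral_cong) (auto simp: f_def)
    also have "\<dots> = 1 - measure N A / 2"
      using A N.emeasure_finite[of A] N.prob_space
      by (subst Bochner_Integration.integral_diff)
        (auto simp: less_top[symmetric] intro!: integrable_divide_zero integrable_real_indicator)
    finally show ?thesis .
  qed
  moreover have "integral\<^sup>L N (f i) = 1" if "i \<notin> C" for i
    using that N.prob_space by (simp add: f_def)
  ultimately have "integral\<^sup>L N (f i) = (if i \<in> C then 1 - measure N A / 2 else 1)" for i
    by simp
  then have expectation_prod:
    "(\<integral>x. (\<Prod>i\<in>I. f i (x i)) \<partial>PiM I (\<lambda>_. N)) = (1 - measure N A / 2) ^ card C"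
    using I f_integrable by (simp add: product_integral_prod prod.If_cases Int_absorb1)
  have prod_f: "(\<Prod>i\<in>I. f i (x i)) = (1 / 2) ^ card {i \<in> C. x i \<in> A}" for x
  proof -
    have "I \<inter> {i \<in> C. x i \<in> A} = {i \<in> C. x i \<in> A}"
      using I by auto
    then show ?thesis
      using I by (simp add: f_def prod.If_cases)
  qed
  have "measure (PiM I (\<lambda>_. N)) {x \<in> space (PiM I (\<lambda>_. N)). card {i \<in> C. x i \<in> A} \<le> m}
      = measure (PiM I (\<lambda>_. N)) {x \<in> space (PiM I (\<lambda>_. N)). (1 / 2) ^ m \<le> (\<Prod>i\<in>I. f i (x i))}"
    by (simp add: prod_f)
  also have "\<dots> \<le> (\<integral>x. (\<Prod>i\<in>I. f i (x i)) \<partial>PiM I (\<lambda>_. N)) / (1 / 2) ^ m"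
    using I f_integrable
    by (intro integral_Markov_inequality_measure[where A = "{}"])
      (auto simp: f_def intro!: product_integrable_prod prod_nonneg)
  also have "\<dots> = 2 ^ m * (1 - measure N A / 2) ^ card C"
    by (simp add: expectation_prod power_one_over)
  finally show ?thesis .
qed

lemma finite_tree_nodes: "finite (tree_nodes d k)"
proof -
  have "tree_nodes d k = {u. set u \<subseteq> {..<d} \<and> length u \<le> k}"
    by (auto simp: tree_nodes_def)
  then show ?thesis
    by (simp add: finite_lists_length_le)
qed

lemma finite_tree_edges: "finite (tree_edges d k)"
  using finite_tree_nodes by (simp add: tree_edges_def)

lemma child_in_tree_edges:
  "u \<in> tree_nodes d k \<Longrightarrow> length u < k \<Longrightarrow> i < d \<Longrightarrow> u @ [i] \<in> tree_edges d k"
  by (auto simp: tree_edges_def tree_nodes_def)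

lemma prob_space_arrival_space: "prob_space (arrival_space d k)"
  unfolding arrival_space_def by (intro prob_space_PiM prob_space_uniform01)

lemma sets_Ival: "Ival k h \<in> sets borel"
  by (simp add: Ival_def)

lemma measure_not_bad_node_le:
  assumes u: "u \<in> tree_nodes d k" "length u < k"
  shows "measure (arrival_space d k) {r \<in> space (arrival_space d k). \<not> bad_node d k r u}
           \<le> 2 ^ (k\<^sup>2 - 1) * (1 - 1 / (2 * real k)) ^ d"
proof -
  define A where "A = Ival k (height k u)"
  define C where "C = (\<lambda>i. u @ [i]) ` {..<d}"
  have h: "1 \<le> height k u" "height k u \<le> k"
    using u by (auto simp: height_def)
  have measure_A: "measure uniform01 A = 1 / real k"
    unfolding A_def Ival_def using h
    by (subst measure_uniform01_Ioo) (auto simp: divide_right_mono diff_divide_distrib)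
  have card_C: "card C = d"
    unfolding C_def by (simp add: card_image inj_on_def)
  have "{e \<in> C. r e \<in> A} = (\<lambda>i. u @ [i]) ` {i. i < d \<and> r (u @ [i]) \<in> A}" for r
    by (auto simp: C_def)
  then have hits: "card {e \<in> C. r e \<in> A} = card {i. i < d \<and> r (u @ [i]) \<in> A}" for r
    by (simp add: card_image inj_on_def)
  have "k\<^sup>2 \<ge> 1"
    using u by simp
  then have not_le: "\<not> k\<^sup>2 \<le> c \<longleftrightarrow> c \<le> k\<^sup>2 - 1" for c :: nat
    by linarith
  have "{r \<in> space (arrival_space d k). \<not> bad_node d k r u}
      = {r \<in> space (arrival_space d k). card {e \<in> C. r e \<in> A} \<le> k\<^sup>2 - 1}"
    unfolding hits using u by (simp add: bad_node_def A_def not_le)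
  also have "measure (arrival_space d k) \<dots>
      \<le> 2 ^ (k\<^sup>2 - 1) * (1 - measure uniform01 A / 2) ^ card C"
    unfolding arrival_space_def using u
    by (intro measure_PiM_few_hits_le prob_space_uniform01 finite_tree_edges)
       (auto simp: C_def A_def sets_Ival child_in_tree_edges)
  finally show ?thesis
    by (simp add: measure_A card_C mult.commute)
qed

lemma pred_arrival_time_in:
  assumes "e \<in> tree_edges d k" "B \<in> sets borel"
  shows "Measurable.pred (arrival_space d k) (\<lambda>r. r e \<in> B)"
  unfolding arrival_space_def
  by (rule pred_sets2[OF _ measurable_component_singleton]) (use assms in simp_all)

lemma pred_bad_node [measurable]: "Measurable.pred (arrival_space d k) (\<lambda>r. bad_node d k r u)"
proof (cases "u \<in> tree_nodes d k \<and> length u < k")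
  case u: True
  have hit_pred:
    "Measurable.pred (arrival_space d k) (\<lambda>r. i < d \<and> r (u @ [i]) \<in> Ival k (height k u))" for i
  proof (cases "i < d")
    case i: True
    then have "u @ [i] \<in> tree_edges d k"
      using u by (simp add: child_in_tree_edges)
    then have "Measurable.pred (arrival_space d k) (\<lambda>r. r (u @ [i]) \<in> Ival k (height k u))"
      using sets_Ival by (rule pred_arrival_time_in)
    then show ?thesis
      using i by simp
  qed simp
  have "(\<lambda>r. card {i. i < d \<and> r (u @ [i]) \<in> Ival k (height k u)})
          \<in> measurable (arrival_space d k) (count_space UNIV)"
    by (rule measurable_card) (use hit_pred[unfolded pred_def] in \<open>simp only: mem_Collect_eq\<close>)
  then have "Measurable.pred (arrival_space d k)
               (\<lambda>r. k\<^sup>2 \<le> card {i. i < d \<and> r (u @ [i]) \<in> Ival k (height k u)})"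
    by (rule measurable_compose) simp
  moreover have "(\<lambda>r. bad_node d k r u)
      = (\<lambda>r. k\<^sup>2 \<le> card {i. i < d \<and> r (u @ [i]) \<in> Ival k (height k u)})"
    using u by (simp add: bad_node_def fun_eq_iff)
  ultimately show ?thesis
    by (simp only:)
next
  case False
  then have "(\<lambda>r. bad_node d k r u) = (\<lambda>_. False)"
    by (auto simp: bad_node_def fun_eq_iff)
  then show ?thesis
    by simp
qed

lemma sets_exists_bad_subtree:
  "{r \<in> space (arrival_space d k). \<exists>S. bad_subtree d k r S} \<in> sets (arrival_space d k)"
proof -
  have "finite (Pow (tree_nodes d k))"
    by (simp add: finite_tree_nodes)
  then have "{r \<in> space (arrival_space d k). \<exists>S \<in> Pow (tree_nodes d k). bad_subtree d k r S}
               \<in> sets (arrival_space d k)"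
    unfolding bad_subtree_def by measurable
  also have "{r \<in> space (arrival_space d k). \<exists>S \<in> Pow (tree_nodes d k). bad_subtree d k r S}
      = {r \<in> space (arrival_space d k). \<exists>S. bad_subtree d k r S}"
    by (auto simp: bad_subtree_def)
  finally show ?thesis .
qed

lemma bad_subtree_full_prefix_tree:
  assumes "k\<^sup>2 \<le> d"
    and "\<And>u. set u \<subseteq> {..<k\<^sup>2} \<Longrightarrow> length u < k \<Longrightarrow> bad_node d k r u"
  shows "bad_subtree d k r {u. set u \<subseteq> {..<k\<^sup>2} \<and> length u \<le> k}"
proof -
  have "{i. i < d \<and> u @ [i] \<in> {u. set u \<subseteq> {..<k\<^sup>2} \<and> length u \<le> k}} = {..<k\<^sup>2}"
    if "set u \<subseteq> {..<k\<^sup>2}" "length u < k" for u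
    using that assms(1) by auto
  then show ?thesis
    using assms by (auto simp: bad_subtree_def tree_nodes_def dest: in_set_butlastD)
qed

lemma card_lists_length_less_le:
  assumes "n \<le> m"
  shows "card {xs. set xs \<subseteq> {..<m} \<and> length xs < n} \<le> m ^ n"
proof (cases n)
  case (Suc l)
  have "{xs. set xs \<subseteq> {..<m} \<and> length xs < n} = {xs. set xs \<subseteq> {..<m} \<and> length xs \<le> l}"
    using Suc by auto
  then have "card {xs. set xs \<subseteq> {..<m} \<and> length xs < n} = (\<Sum>i\<le>l. m ^ i)"
    by (simp add: card_lists_length_le)
  also have "\<dots> \<le> (\<Sum>i\<le>l. m ^ l)"
    using Suc assms by (intro sum_mono power_increasing) auto
  also have "\<dots> = n * m ^ l"
    using Suc by simp
  also have "\<dots> \<le> m * m ^ l"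
    using assms by (rule mult_right_mono) simp
  also have "\<dots> = m ^ n"
    using Suc by simp
  finally show ?thesis .
qed simp

lemma sq_minus_one_le_cube:
  fixes k :: nat
  assumes "k \<ge> 1"
  shows "8 * (k\<^sup>2 - 1) \<le> 3 * k ^ 3"
proof -
  consider "k = 1" | "k = 2" | "k \<ge> 3"
    using assms by linarith
  then show ?thesis
  proof cases
    case 3
    have "8 * (k\<^sup>2 - 1) \<le> 8 * k\<^sup>2"
      by simp
    also have "\<dots> \<le> (3 * k) * k\<^sup>2"
      using 3 by (intro mult_right_mono) auto
    also have "\<dots> = 3 * k ^ 3"
      by (simp add: power2_eq_square power3_eq_cube)
    finally show ?thesis .
  qed simp_all
qed

lemma two_pow_mult_pow_le_exp:
  assumes "k \<ge> 1"
  shows "2 ^ (k\<^sup>2 - 1) * (1 - 1 / (2 * real k)) ^ (k ^ 4) \<le> exp (- (real k ^ 3 / 8))"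
proof -
  have "1 / (2 * real k) \<le> 1"
    using assms by simp
  moreover have "1 - 1 / (2 * real k) \<le> exp (- (1 / (2 * real k)))"
    using exp_ge_add_one_self[of "- (1 / (2 * real k))"] by simp
  ultimately have "(1 - 1 / (2 * real k)) ^ (k ^ 4) \<le> exp (- (1 / (2 * real k))) ^ (k ^ 4)"
    by (intro power_mono) simp_all
  also have "\<dots> = exp (real (k ^ 4) * - (1 / (2 * real k)))"
    by (simp only: exp_of_nat_mult)
  also have "real (k ^ 4) * - (1 / (2 * real k)) = - (real k ^ 3 / 2)"
    using assms by (simp add: field_simps eval_nat_numeral)
  finally have one_minus_pow: "(1 - 1 / (2 * real k)) ^ (k ^ 4) \<le> exp (- (real k ^ 3 / 2))" .
  have "(2::real) ^ (k\<^sup>2 - 1) \<le> exp 1 ^ (k\<^sup>2 - 1)"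
    using exp_ge_add_one_self[of 1] by (intro power_mono) auto
  also have "\<dots> = exp (real k ^ 2 - 1)"
    using assms by (simp add: exp_of_nat_mult[symmetric] of_nat_diff)
  finally have two_pow: "(2::real) ^ (k\<^sup>2 - 1) \<le> exp (real k ^ 2 - 1)" .
  have "8 * (k\<^sup>2 - 1) \<le> 3 * k ^ 3"
    using assms by (rule sq_minus_one_le_cube)
  then have "real (8 * (k\<^sup>2 - 1)) \<le> real (3 * k ^ 3)"
    by (simp only: of_nat_le_iff)
  then have cubic: "8 * (real k ^ 2 - 1) \<le> 3 * real k ^ 3"
    using assms by (simp add: of_nat_diff)
  have "2 ^ (k\<^sup>2 - 1) * (1 - 1 / (2 * real k)) ^ (k ^ 4)
      \<le> exp (real k ^ 2 - 1) * exp (- (real k ^ 3 / 2))"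
    using two_pow one_minus_pow assms by (intro mult_mono) auto
  also have "\<dots> \<le> exp (- (real k ^ 3 / 8))"
    using cubic by (simp add: exp_add[symmetric])
  finally show ?thesis .
qed

lemma measure_exists_bad_subtree_ge:
  assumes "k\<^sup>2 \<le> d"
  shows "measure (arrival_space d k) {r \<in> space (arrival_space d k). \<exists>S. bad_subtree d k r S}
           \<ge> 1 - card {u. set u \<subseteq> {..<k\<^sup>2} \<and> length u < k}
                   * (2 ^ (k\<^sup>2 - 1) * (1 - 1 / (2 * real k)) ^ d)"
proof -
  define M where "M = arrival_space d k"
  define U where "U = {u. set u \<subseteq> {..<k\<^sup>2} \<and> length u < k}"
  define fail where "fail u = {r \<in> space M. \<not> bad_node d k r u}" for u
  interpret prob_space M
    unfolding M_def by (rule prob_space_arrival_space)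
  have U_nodes: "u \<in> tree_nodes d k" "length u < k" if "u \<in> U" for u
    using that assms by (auto simp: U_def tree_nodes_def)
  then have "finite U"
    using finite_subset[OF _ finite_tree_nodes] by blast
  have fail_sets: "fail u \<in> sets M" for u
    unfolding fail_def M_def by measurable
  have "space M - (\<Union>u\<in>U. fail u) \<subseteq> {r \<in> space M. \<exists>S. bad_subtree d k r S}"
    using bad_subtree_full_prefix_tree[OF assms] by (auto simp: U_def fail_def)
  then have "measure M (space M - (\<Union>u\<in>U. fail u))
               \<le> measure M {r \<in> space M. \<exists>S. bad_subtree d k r S}"
    by (rule finite_measure_mono) (simp add: M_def sets_exists_bad_subtree)
  moreover have "measure M (space M - (\<Union>u\<in>U. fail u)) = 1 - measure M (\<Union>u\<in>U. fail u)"
    using \<open>finite U\<close> fail_sets by (intro prob_compl) auto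
  moreover have "measure M (\<Union>u\<in>U. fail u) \<le> (\<Sum>u\<in>U. measure M (fail u))"
    using \<open>finite U\<close> fail_sets by (rule measure_UNION_le)
  moreover have "\<dots> \<le> card U * (2 ^ (k\<^sup>2 - 1) * (1 - 1 / (2 * real k)) ^ d)"
    using measure_not_bad_node_le U_nodes
    by (intro sum_bounded_above) (simp add: fail_def M_def)
  ultimately show ?thesis
    unfolding M_def U_def by linarith
qed

theorem mainTheorem4:
  fixes k :: nat
  assumes "k \<ge> 1"
  shows "measure (arrival_space (k^4) k)
           {r \<in> space (arrival_space (k^4) k). \<exists>S. bad_subtree (k^4) k r S}
         \<ge> 1 - 2 * real k ^ (2*k) / exp (real k ^ 3 / 8)"
proof -
  define U where "U = {u. set u \<subseteq> {..<k\<^sup>2} \<and> length u < k}"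
  have "card U \<le> (k\<^sup>2) ^ k"
    unfolding U_def by (rule card_lists_length_less_le) (simp add: power2_eq_square)
  then have "real (card U) \<le> real k ^ (2 * k)"
    by (simp add: power_mult flip: of_nat_power)
  then have "card U * (2 ^ (k\<^sup>2 - 1) * (1 - 1 / (2 * real k)) ^ (k ^ 4))
               \<le> real k ^ (2 * k) * exp (- (real k ^ 3 / 8))"
    using two_pow_mult_pow_le_exp[OF assms] assms by (intro mult_mono) simp_all
  also have "\<dots> \<le> 2 * real k ^ (2 * k) / exp (real k ^ 3 / 8)"
    by (simp add: exp_minus field_simps)
  finally have "card U * (2 ^ (k\<^sup>2 - 1) * (1 - 1 / (2 * real k)) ^ (k ^ 4))
                  \<le> 2 * real k ^ (2 * k) / exp (real k ^ 3 / 8)" .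
  moreover have "k\<^sup>2 \<le> k ^ 4"
    using assms by (simp add: power_increasing)
  ultimately show ?thesis
    using measure_exists_bad_subtree_ge[of k "k ^ 4"] unfolding U_def by linarith
qed

end
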